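(* Assume the setting below and sharp missingness: $M_i(1)=M_i(0)$ for all $i$. Then: (i) for every $1\le k\le n_{\mathcal S1}$ and $c\in\mathbb R$, $p_{\texttt t,k,c,\mathcal S}$ is a valid p-value for $H^{\texttt{to}}_{k,c}:\sum_{i\in\mathcal S}Z_i\mathbf 1\{\tau_i>c\}\le n_{\mathcal S1}-k$ (equivalently $\tau_{\texttt{to}(k)}\le c$), i.e. $\mathbb P(p_{\texttt t,k,c,\mathcal S}\le\alpha\text{ and }H^{\texttt{to}}_{k,c}\text{ holds})\le\alpha$ for all $\alpha\in(0,1)$; (ii) for every $1\le k\le n_{\mathcal S1}$, $\mathcal I^\alpha_{\texttt{to},k}:=\{c\in\mathbb R:p_{\texttt t,k,c,\mathcal S}>\alpha\}$ is a $1-\alpha$ prediction interval for $\tau_{\texttt{to}(k)}$, and it is a one-sided interval of the form $[\hat\tau_{\texttt{to}(k)},\infty)$ or $(\hat\tau_{\texttt{to}(k)},\infty)$ with $\hat\tau_{\texttt{to}(k)}=\inf\mathcal I^\alpha_{\texttt{to},k}$; (iii) these are simultaneously valid: $\mathbb P(\tau_{\texttt{to}(k)}\in\mathcal I^\alpha_{\texttt{to},k}\text{ for all }1\le k\le n_{\mathcal S1})\ge1-\alpha$.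
   Context: There are $n$ units with fixed potential outcomes $Y_i^\star(0),Y_i^\star(1)\in\mathbb R$ and fixed potential missingness indicators $M_i(0),M_i(1)\in\{0,1\}$; $\tau_i=Y_i^\star(1)-Y_i^\star(0)$. $\boldsymbol Z\in\{0,1\}^n$ is from a completely randomized experiment: uniform over vectors with exactly $n_1$ ones ($n_1,n_0\ge1$ fixed, $n_1+n_0=n$), independent of all potential quantities. $M_i=Z_iM_i(1)+(1-Z_i)M_i(0)$; the realized outcome $Z_iY_i^\star(1)+(1-Z_i)Y_i^\star(0)$ is observed, denoted $Y_i$, iff $M_i=1$. $\mathcal S=\{i:M_i=1\}$, $n_{\mathcal S1}=\sum_{i\in\mathcal S}Z_i$, $n_{\mathcal S0}=|\mathcal S|-n_{\mathcal S1}$; $\tau_{\texttt{to}(1)}\le\dots\le\tau_{\texttt{to}(n_{\mathcal S1})}$ are the sorted $\tau_i$ over $i\in\mathcal S$ with $Z_i=1$. A $1-\alpha$ prediction interval $\mathcal I$ for a random quantity $\theta$ means $\mathbb P(\theta\in\mathcal I)\ge1-\alpha$. Statistics: $\overline{\mathbb R}=\mathbb R\cup\{\pm\infty\}$; $\psi_{i,j}(y,y')=\mathbf 1\{y>y'\}+\mathbf 1\{y=y'\}\mathbf 1\{i\ge j\}$; $\mathrm{rank}_i(\boldsymbol y)=\sum_j\psi_{i,j}(y_i,y_j)$; $\phi$ nondecreasing real function on nonnegative integers; $t_{\mathrm R,\phi}(\boldsymbol z,\boldsymbol y)$ is either $\sum_iz_i\phi(\mathrm{rank}_i(\boldsymbol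 y))$ or $\sum_iz_i\phi(\sum_j(1-z_j)\psi_{i,j}(y_i,y_j))$ (either choice). $t_{\mathrm R,\phi,\mathcal S}(\boldsymbol z,\boldsymbol y)=t_{\mathrm R,\phi}(\boldsymbol z_{\mathcal S},\boldsymbol y_{\mathcal S})$ (subvectors indexed by $\mathcal S$, original order); $G_{\mathrm R,\phi,\mathcal S}(c)=\mathbb P(t_{\mathrm R,\phi,\mathcal S}(\boldsymbol A,\boldsymbol y_0)\ge c)$ with $\boldsymbol A_{\mathcal S}$ uniform over assignments of $\mathcal S$ with exactly $n_{\mathcal S1}$ treated and $\boldsymbol y_0\in\mathbb R^n$ fixed. p-value: write $\{i:Z_i=M_i=1\}=\{j_1,\dots,j_{n_{\mathcal S1}}\}$ with $\psi_{j_{l+1},j_l}(Y_{j_{l+1}},Y_{j_l})=1$; $\mathcal J_L=\{j_{n_{\mathcal S1}-L+1},\dots,j_{n_{\mathcal S1}}\}$ for $L\ge1$, $\mathcal J_0=\emptyset$. Let $\boldsymbol v\in\overline{\mathbb R}^n$ with $v_i=-\infty$ for $i\in\mathcal J_{n_{\mathcal S1}-k}$ and $v_i=Y_i-cZ_i$ for other $i\in\mathcal S$ (coordinates outside $\mathcal S$ are unused). Then $p_{\texttt t,k,c,\mathcal S}=G_{\mathrm R,\phi,\mathcal S}(t_{\mathrm R,\phi,\mathcal S}(\boldsymbol Z,\boldsymbol v))$. *)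

theory Defs
  imports "HOL-Probability.Probability"
begin

(* Units are indexed 0..<n.  A treatment vector z in {0,1}^n is represented by the
   set of treated units {i. z_i = 1}. *)

definition assignments :: "nat \<Rightarrow> nat \<Rightarrow> nat set set" where
  "assignments n n1 = {T. T \<subseteq> {..<n} \<and> card T = n1}"

definition psi :: "nat \<Rightarrow> nat \<Rightarrow> 'b::linorder \<Rightarrow> 'b \<Rightarrow> nat" where
  "psi i j y y' = (if y > y' then 1 else 0) + (if y = y' \<and> i \<ge> j then 1 else 0)"

definition rankS :: "nat set \<Rightarrow> (nat \<Rightarrow> 'b::linorder) \<Rightarrow> nat \<Rightarrow> nat" where
  "rankS S y i = (\<Sum>j\<in>S. psi i j (y i) (y j))"

definition tRS :: "bool \<Rightarrow> (nat \<Rightarrow> real) \<Rightarrow> nat set \<Rightarrow> nat set \<Rightarrow> (nat \<Rightarrow> 'b::linorder) \<Rightarrow> real" where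
  "tRS b phi S z y =
     (\<Sum>i\<in>S \<inter> z. phi (if b then rankS S y i
                          else (\<Sum>j\<in>S - z. psi i j (y i) (y j))))"

(* G_{R,phi,S}(c), with m = n_{S1} treated units among S *)
definition GRS :: "bool \<Rightarrow> (nat \<Rightarrow> real) \<Rightarrow> nat set \<Rightarrow> nat \<Rightarrow> (nat \<Rightarrow> real) \<Rightarrow> real \<Rightarrow> real" where
  "GRS b phi S m y0 c =
     measure_pmf.prob (pmf_of_set {A. A \<subseteq> S \<and> card A = m}) {A. tRS b phi S A y0 \<ge> c}"

definition Yobs :: "(nat \<Rightarrow> real) \<Rightarrow> (nat \<Rightarrow> real) \<Rightarrow> nat set \<Rightarrow> nat \<Rightarrow> real" where
  "Yobs Y1 Y0 T i = (if i \<in> T then Y1 i else Y0 i)"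

definition Mobs :: "(nat \<Rightarrow> bool) \<Rightarrow> (nat \<Rightarrow> bool) \<Rightarrow> nat set \<Rightarrow> nat \<Rightarrow> bool" where
  "Mobs M1 M0 T i = (if i \<in> T then M1 i else M0 i)"

definition Sobs :: "nat \<Rightarrow> (nat \<Rightarrow> bool) \<Rightarrow> (nat \<Rightarrow> bool) \<Rightarrow> nat set \<Rightarrow> nat set" where
  "Sobs n M1 M0 T = {i. i < n \<and> Mobs M1 M0 T i}"

definition nS1 :: "nat \<Rightarrow> (nat \<Rightarrow> bool) \<Rightarrow> (nat \<Rightarrow> bool) \<Rightarrow> nat set \<Rightarrow> nat" where
  "nS1 n M1 M0 T = card (Sobs n M1 M0 T \<inter> T)"

(* J_L: the top L units of {i : Z_i = M_i = 1} in the order j_1,...,j_{n_S1}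
   (i.e. those with fewer than L units strictly above them in that order) *)
definition Jtop :: "nat \<Rightarrow> (nat \<Rightarrow> bool) \<Rightarrow> (nat \<Rightarrow> bool) \<Rightarrow> (nat \<Rightarrow> real) \<Rightarrow> (nat \<Rightarrow> real)
                    \<Rightarrow> nat set \<Rightarrow> nat \<Rightarrow> nat set" where
  "Jtop n M1 M0 Y1 Y0 T L =
     (let ST = Sobs n M1 M0 T \<inter> T; Y = Yobs Y1 Y0 T in
      {i \<in> ST. card {j \<in> ST. j \<noteq> i \<and> psi j i (Y j) (Y i) = 1} < L})"

definition vvec :: "nat \<Rightarrow> (nat \<Rightarrow> bool) \<Rightarrow> (nat \<Rightarrow> bool) \<Rightarrow> (nat \<Rightarrow> real) \<Rightarrow> (nat \<Rightarrow> real)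
                    \<Rightarrow> nat set \<Rightarrow> nat \<Rightarrow> real \<Rightarrow> nat \<Rightarrow> ereal" where
  "vvec n M1 M0 Y1 Y0 T k c i =
     (if i \<in> Jtop n M1 M0 Y1 Y0 T (nS1 n M1 M0 T - k) then -\<infinity>
      else ereal (Yobs Y1 Y0 T i - c * (if i \<in> T then 1 else 0)))"

definition pval :: "nat \<Rightarrow> (nat \<Rightarrow> bool) \<Rightarrow> (nat \<Rightarrow> bool) \<Rightarrow> (nat \<Rightarrow> real) \<Rightarrow> (nat \<Rightarrow> real)
                    \<Rightarrow> bool \<Rightarrow> (nat \<Rightarrow> real) \<Rightarrow> (nat \<Rightarrow> real) \<Rightarrow> nat set \<Rightarrow> nat \<Rightarrow> real \<Rightarrow> real" where
  "pval n M1 M0 Y1 Y0 b phi y0 T k c =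
     (let S = Sobs n M1 M0 T in
      GRS b phi S (nS1 n M1 M0 T) y0 (tRS b phi S T (vvec n M1 M0 Y1 Y0 T k c)))"

(* tau_{to(k)}: k-th smallest (1-based) of tau_i over i in S with Z_i = 1 *)
definition tau_to :: "nat \<Rightarrow> (nat \<Rightarrow> bool) \<Rightarrow> (nat \<Rightarrow> bool) \<Rightarrow> (nat \<Rightarrow> real) \<Rightarrow> (nat \<Rightarrow> real)
                      \<Rightarrow> nat set \<Rightarrow> nat \<Rightarrow> real" where
  "tau_to n M1 M0 Y1 Y0 T k =
     sort (map (\<lambda>i. Y1 i - Y0 i) (sorted_list_of_set (Sobs n M1 M0 T \<inter> T))) ! (k - 1)"

definition Hto :: "nat \<Rightarrow> (nat \<Rightarrow> bool) \<Rightarrow> (nat \<Rightarrow> bool) \<Rightarrow> (nat \<Rightarrow> real) \<Rightarrow> (nat \<Rightarrow> real)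
                   \<Rightarrow> nat set \<Rightarrow> nat \<Rightarrow> real \<Rightarrow> bool" where
  "Hto n M1 M0 Y1 Y0 T k c =
     (card {i \<in> Sobs n M1 M0 T \<inter> T. Y1 i - Y0 i > c} \<le> nS1 n M1 M0 T - k)"

definition Ito :: "nat \<Rightarrow> (nat \<Rightarrow> bool) \<Rightarrow> (nat \<Rightarrow> bool) \<Rightarrow> (nat \<Rightarrow> real) \<Rightarrow> (nat \<Rightarrow> real)
                    \<Rightarrow> bool \<Rightarrow> (nat \<Rightarrow> real) \<Rightarrow> (nat \<Rightarrow> real) \<Rightarrow> real \<Rightarrow> nat set \<Rightarrow> nat \<Rightarrow> real set" where
  "Ito n M1 M0 Y1 Y0 b phi y0 \<alpha> T k = {c. pval n M1 M0 Y1 Y0 b phi y0 T k c > \<alpha>}"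

end

theory Submission
  imports Defs
begin

(* Under sharp missingness the observed set S does not depend on the assignment, and given the
   number of treated units in S the treated subset of S is uniform.  Hence the randomization
   p-value p* of the rank statistic evaluated at the control outcomes Y(0) is a valid p-value,
   although it cannot be computed from the data.
   With ties broken by unit index, a rank statistic is a sum over the ranks r of the treated units
   of phi applied to the number of controls below the treated unit of rank r, so it can only
   decrease when every control gets more treated units below it.  Under H_{k,c}, sending the top
   n_{S1} - k treated units to -infinity and shifting the other treated outcomes by -c does exactly
   this relative to Y(0); hence p_{t,k,c,S} >= p*.  Since tau_{to(k)} satisfies H_{k,tau_{to(k)}}
   for every k, all prediction intervals cover simultaneously outside the event p* <= alpha, and
   each of them is a half-line because p_{t,k,c,S} is nondecreasing in c. *)

section \<open>Ordering units by value, ties broken by index\<close>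

definition precedes :: "(nat \<Rightarrow> 'a::linorder) \<Rightarrow> nat \<Rightarrow> nat \<Rightarrow> bool" where
  "precedes y i j \<longleftrightarrow> y i < y j \<or> (y i = y j \<and> i < j)"

lemma precedes_trans: "precedes y i j \<Longrightarrow> precedes y j k \<Longrightarrow> precedes y i k"
  unfolding precedes_def by auto

lemma precedes_irrefl: "\<not> precedes y i i"
  unfolding precedes_def by auto

lemma not_precedes_iff: "i \<noteq> j \<Longrightarrow> \<not> precedes y i j \<longleftrightarrow> precedes y j i"
  unfolding precedes_def by auto

lemma precedes_mono_left: "v i \<le> u i \<Longrightarrow> v j = u j \<Longrightarrow> precedes u i j \<Longrightarrow> precedes v i j"
  unfolding precedes_def by (auto intro: order.strict_trans1)

lemma precedes_ereal: "precedes (\<lambda>i. ereal (y i)) = precedes y"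
  unfolding precedes_def by (intro ext) simp

lemma precedes_id: "precedes id i j \<longleftrightarrow> i < j"
  unfolding precedes_def by auto

definition num_below :: "(nat \<Rightarrow> 'a::linorder) \<Rightarrow> nat set \<Rightarrow> nat \<Rightarrow> nat" where
  "num_below y A j = card {i\<in>A. precedes y i j}"

lemma num_below_less_iff:
  assumes "finite A" "i \<in> A" "i \<noteq> j"
  shows "num_below y A i < num_below y A j \<longleftrightarrow> precedes y i j"
proof
  assume "precedes y i j"
  then have "{k\<in>A. precedes y k i} \<subset> {k\<in>A. precedes y k j}"
    using assms(2) precedes_trans precedes_irrefl by blast
  then show "num_below y A i < num_below y A j"
    unfolding num_below_def using assms(1) by (simp add: psubset_card_mono)
next
  assume less: "num_below y A i < num_below y A j"
  show "precedes y i j"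
  proof (rule ccontr)
    assume "\<not> precedes y i j"
    then have "precedes y j i"
      using not_precedes_iff assms(3) by blast
    then have "{k\<in>A. precedes y k j} \<subseteq> {k\<in>A. precedes y k i}"
      using precedes_trans by blast
    then have "num_below y A j \<le> num_below y A i"
      unfolding num_below_def using assms(1) by (simp add: card_mono)
    with less show False by simp
  qed
qed

lemma bij_betw_num_below:
  assumes "finite A"
  shows "bij_betw (num_below y A) A {..<card A}"
proof -
  have inj: "inj_on (num_below y A) A"
    by (metis inj_onI less_irrefl not_precedes_iff num_below_less_iff[OF assms])
  have "num_below y A ` A \<subseteq> {..<card A}"
  proof
    fix x assume "x \<in> num_below y A ` A"
    then obtain i where i: "i \<in> A" "x = num_below y A i" by blast
    then have "{k\<in>A. precedes y k i} \<subset> A"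
      using precedes_irrefl by blast
    with i assms show "x \<in> {..<card A}"
      by (simp add: num_below_def psubset_card_mono)
  qed
  moreover have "card (num_below y A ` A) = card {..<card A}"
    using inj by (simp add: card_image)
  ultimately have "num_below y A ` A = {..<card A}"
    by (simp add: card_subset_eq)
  with inj show ?thesis
    by (simp add: bij_betw_def)
qed

lemma card_above_add_num_below:
  assumes "finite A" "i \<in> A"
  shows "card {j\<in>A. precedes y i j} + num_below y A i + 1 = card A"
proof -
  let ?above = "{j\<in>A. precedes y i j}" and ?below = "{j\<in>A. precedes y j i}"
  have "A = insert i (?above \<union> ?below)"
    using assms(2) not_precedes_iff by blast
  moreover have "?above \<inter> ?below = {}" "i \<notin> ?above \<union> ?below"
    using precedes_trans precedes_irrefl by blast+
  ultimately have "card A = Suc (card ?above + card ?below)"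
    using assms(1) by (metis card_Un_disjoint card_insert_disjoint finite_Un finite_insert)
  then show ?thesis
    unfolding num_below_def by simp
qed

definition top_set :: "(nat \<Rightarrow> 'a::linorder) \<Rightarrow> nat set \<Rightarrow> nat \<Rightarrow> nat set" where
  "top_set y A L = {i\<in>A. card {j\<in>A. precedes y i j} < L}"

lemma card_top_set:
  assumes "finite A" "L \<le> card A"
  shows "card (top_set y A L) = L"
proof -
  have "card {j\<in>A. precedes y i j} < L \<longleftrightarrow> card A - L \<le> num_below y A i" if "i \<in> A" for i
    using card_above_add_num_below[OF assms(1) that, of y] assms(2) by linarith
  then have "top_set y A L = {i\<in>A. card A - L \<le> num_below y A i}"
    unfolding top_set_def by blast
  also have "card \<dots> = card {r\<in>{..<card A}. card A - L \<le> r}"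
    by (rule bij_betw_same_card, rule bij_betw_Collect[OF bij_betw_num_below[OF assms(1)]]) simp
  also have "{r\<in>{..<card A}. card A - L \<le> r} = {card A - L..<card A}"
    by auto
  finally show ?thesis
    using assms(2) by simp
qed

lemma precedes_top_set:
  assumes "finite A" "r \<in> A - top_set y A L" "q \<in> top_set y A L"
  shows "precedes y r q"
proof (rule ccontr)
  assume "\<not> precedes y r q"
  moreover have "r \<noteq> q"
    using assms(2,3) by blast
  ultimately have "precedes y q r"
    using not_precedes_iff by blast
  then have "{j\<in>A. precedes y r j} \<subseteq> {j\<in>A. precedes y q j}"
    using precedes_trans by blast
  then have "card {j\<in>A. precedes y r j} \<le> card {j\<in>A. precedes y q j}"
    using assms(1) by (simp add: card_mono)
  with assms(2,3) show False
    unfolding top_set_def by auto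
qed

section \<open>Rank statistics\<close>

lemma psi_eq_precedes: "psi i j (y i) (y j) = (if precedes y i j then 0 else 1)"
  unfolding psi_def precedes_def by auto

lemma sum_psi_eq_card:
  "finite X \<Longrightarrow> (\<Sum>j\<in>X. psi i j (y i) (y j)) = card {j\<in>X. \<not> precedes y i j}"
proof -
  assume "finite X"
  moreover have "X \<inter> - Collect (precedes y i) = {j\<in>X. \<not> precedes y i j}"
    by auto
  ultimately show ?thesis
    by (simp add: psi_eq_precedes sum.If_cases)
qed

definition controls_below :: "(nat \<Rightarrow> 'a::linorder) \<Rightarrow> nat set \<Rightarrow> nat set \<Rightarrow> nat \<Rightarrow> nat" where
  "controls_below y S A r = card {j\<in>S - A. num_below y A j \<le> r}"

lemma controls_below_num_below:
  assumes "finite A" "i \<in> A"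
  shows "controls_below y S A (num_below y A i) = card {j\<in>S - A. \<not> precedes y i j}"
proof -
  have "num_below y A j \<le> num_below y A i \<longleftrightarrow> \<not> precedes y i j" if "j \<in> S - A" for j
  proof -
    have "i \<noteq> j"
      using assms(2) that by blast
    from num_below_less_iff[OF assms this, where y = y] show ?thesis
      by (metis not_less)
  qed
  then have "{j\<in>S - A. num_below y A j \<le> num_below y A i} = {j\<in>S - A. \<not> precedes y i j}"
    by blast
  then show ?thesis
    unfolding controls_below_def by simp
qed

lemma rankS_eq_num_below:
  assumes "finite S" "A \<subseteq> S" "i \<in> A"
  shows "rankS S y i = num_below y A i + 1 + controls_below y S A (num_below y A i)"
proof -
  have finA: "finite A"
    using assms(1,2) finite_subset by blast
  have "{j\<in>A. \<not> precedes y i j} = insert i {j\<in>A. precedes y j i}"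
    using assms(3) unfolding precedes_def by auto
  then have treated: "card {j\<in>A. \<not> precedes y i j} = num_below y A i + 1"
    using finA by (simp add: num_below_def precedes_irrefl)
  have "{j\<in>S. \<not> precedes y i j} = {j\<in>A. \<not> precedes y i j} \<union> {j\<in>S - A. \<not> precedes y i j}"
    using assms(2) by blast
  then have "rankS S y i = card ({j\<in>A. \<not> precedes y i j} \<union> {j\<in>S - A. \<not> precedes y i j})"
    unfolding rankS_def using assms(1) by (simp add: sum_psi_eq_card[where y = y])
  also have "\<dots> = card {j\<in>A. \<not> precedes y i j} + card {j\<in>S - A. \<not> precedes y i j}"
    by (rule card_Un_disjoint) (use assms(1) finA in auto)
  finally show ?thesis
    unfolding treated controls_below_num_below[OF finA assms(3)] .
qed

lemma tRS_eq_sum_ranks: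
  assumes "finite S" "A \<subseteq> S"
  shows "tRS b phi S A y =
    (\<Sum>r<card A. phi (if b then r + 1 + controls_below y S A r else controls_below y S A r))"
proof -
  have finA: "finite A"
    using assms finite_subset by blast
  let ?r = "num_below y A"
  have "tRS b phi S A y = (\<Sum>i\<in>A. phi (if b then rankS S y i else card {j\<in>S - A. \<not> precedes y i j}))"
    unfolding tRS_def Int_absorb1[OF assms(2)] using assms(1)
    by (intro sum.cong refl) (simp add: sum_psi_eq_card[where y = y])
  also have "\<dots> =
      (\<Sum>i\<in>A. phi (if b then ?r i + 1 + controls_below y S A (?r i) else controls_below y S A (?r i)))"
    by (intro sum.cong refl) (simp add: rankS_eq_num_below[OF assms] controls_below_num_below[OF finA])
  also have "\<dots> = (\<Sum>r<card A. phi (if b then r + 1 + controls_below y S A r else controls_below y S A r))"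
    using sum.reindex_bij_betw[OF bij_betw_num_below[OF finA, where y = y],
        of "\<lambda>r. phi (if b then r + 1 + controls_below y S A r else controls_below y S A r)"]
    by simp
  finally show ?thesis .
qed

lemma tRS_mono:
  fixes u :: "nat \<Rightarrow> 'a::linorder" and v :: "nat \<Rightarrow> 'b::linorder"
  assumes "finite S" "A \<subseteq> S" "mono phi"
    and "\<And>j. j \<in> S - A \<Longrightarrow> num_below u A j \<le> num_below v A j"
  shows "tRS b phi S A v \<le> tRS b phi S A u"
proof -
  have "{j\<in>S - A. num_below v A j \<le> r} \<subseteq> {j\<in>S - A. num_below u A j \<le> r}" for r
    using assms(4) le_trans by blast
  then have "controls_below v S A r \<le> controls_below u S A r" for r
    unfolding controls_below_def using assms(1) by (simp add: card_mono)
  then show ?thesis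
    unfolding tRS_eq_sum_ranks[OF assms(1,2)] by (intro sum_mono monoD[OF assms(3)]) auto
qed

lemma tRS_mono_treated:
  assumes "finite S" "A \<subseteq> S" "mono phi"
    and "\<And>i. i \<in> A \<Longrightarrow> v i \<le> u i" "\<And>j. j \<in> S - A \<Longrightarrow> v j = u j"
  shows "tRS b phi S A v \<le> tRS b phi S A u"
proof (rule tRS_mono[OF assms(1-3)])
  fix j assume j: "j \<in> S - A"
  have "precedes v i j" if "i \<in> A" "precedes u i j" for i
    using precedes_mono_left[OF assms(4)[OF that(1)] assms(5)[OF j] that(2)] .
  moreover have "finite A"
    using assms(1,2) finite_subset by blast
  ultimately show "num_below u A j \<le> num_below v A j"
    unfolding num_below_def by (intro card_mono) auto
qed

lemma tRS_Int: "tRS b phi S (S \<inter> T) y = tRS b phi S T y"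
proof -
  have "S - S \<inter> T = S - T" "S \<inter> (S \<inter> T) = S \<inter> T"
    by auto
  then show ?thesis
    unfolding tRS_def by (simp only:)
qed

lemma tRS_order_iso:
  assumes "finite S" "bij_betw h S S'" "A \<subseteq> S"
    and iso: "\<And>i j. i \<in> S \<Longrightarrow> j \<in> S \<Longrightarrow> precedes y i j \<longleftrightarrow> precedes y' (h i) (h j)"
  shows "tRS b phi S A y = tRS b phi S' (h ` A) y'"
proof -
  have inj: "inj_on h S"
    using assms(2) bij_betw_def by blast
  have below: "num_below y A j = num_below y' (h ` A) (h j)" if "j \<in> S" for j
  proof -
    have "{i'\<in>h ` A. precedes y' i' (h j)} = h ` {i\<in>A. precedes y i j}"
      using iso assms(3) that by auto
    moreover have "inj_on h {i\<in>A. precedes y i j}"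
      using inj assms(3) by (auto intro: inj_on_subset)
    ultimately show ?thesis
      unfolding num_below_def by (simp add: card_image)
  qed
  have "h ` (S - A) = S' - h ` A"
    using assms(2,3) inj by (simp add: inj_on_image_set_diff bij_betw_def)
  then have "bij_betw h (S - A) (S' - h ` A)"
    using bij_betw_subset[OF assms(2) Diff_subset] by blast
  then have "bij_betw h {j\<in>S - A. num_below y A j \<le> r} {j'\<in>S' - h ` A. num_below y' (h ` A) j' \<le> r}" for r
    by (rule bij_betw_Collect) (simp add: below)
  then have controls: "controls_below y S A r = controls_below y' S' (h ` A) r" for r
    unfolding controls_below_def by (rule bij_betw_same_card)
  have "card (h ` A) = card A"
    using inj assms(3) by (simp add: card_image inj_on_subset)
  moreover have "finite S'"
    using assms(1,2) bij_betw_finite by blast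
  moreover have "h ` A \<subseteq> S'"
    using assms(2,3) by (auto simp: bij_betw_def)
  ultimately show ?thesis
    unfolding tRS_eq_sum_ranks[OF assms(1,3)] by (simp only: tRS_eq_sum_ranks controls)
qed

lemma num_below_imputed_ge:
  fixes Y1 Y0 :: "nat \<Rightarrow> real" and v :: "nat \<Rightarrow> ereal"
  assumes "finite A" "J \<subseteq> A" "j \<notin> A"
    and top: "\<And>r q. r \<in> A - J \<Longrightarrow> q \<in> J \<Longrightarrow> precedes Y1 r q"
    and H: "card {i\<in>A. c < Y1 i - Y0 i} \<le> card J"
    and vJ: "\<And>i. i \<in> J \<Longrightarrow> v i = -\<infinity>"
    and vA: "\<And>i. i \<in> A - J \<Longrightarrow> v i = ereal (Y1 i - c)"
    and vj: "v j = ereal (Y0 j)"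
  shows "num_below Y0 A j \<le> num_below v A j"
proof -
  let ?B = "{i\<in>A. c < Y1 i - Y0 i}"
  let ?R = "\<lambda>w. {i\<in>A - J - ?B. precedes w i j}"
  have J_below: "J \<subseteq> {i\<in>A. precedes v i j}"
    using vJ vj assms(2) by (auto simp: precedes_def)
  have R_below: "?R Y0 \<subseteq> ?R v"
  proof
    fix i assume i: "i \<in> ?R Y0"
    then have "v i \<le> ereal (Y0 i)"
      using vA by auto
    with i vj show "i \<in> ?R v"
      using precedes_mono_left[of v i "\<lambda>i. ereal (Y0 i)" j] by (simp add: precedes_ereal)
  qed
  (* Either some q in J - B lies below j under Y0, and then all of A lies below j under v, or
     only units of B and of A - J - B do, and the units of J, at least as many as those of B,
     take over the role of B. *)
  show ?thesis
  proof (cases "\<exists>q\<in>J - ?B. precedes Y0 q j")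
    case True
    then obtain q where q: "q \<in> J" "\<not> c < Y1 q - Y0 q" "precedes Y0 q j"
      using assms(2) by blast
    have "precedes v r j" if r: "r \<in> A - J" for r
      using top[OF r q(1)] q(2,3) vA[OF r] vj unfolding precedes_def by auto
    then have "{i\<in>A. precedes v i j} = A"
      using J_below by blast
    then show ?thesis
      unfolding num_below_def using assms(1) by (simp add: card_mono)
  next
    case False
    then have "{i\<in>A. precedes Y0 i j} \<subseteq> ?B \<union> ?R Y0"
      by blast
    then have "num_below Y0 A j \<le> card (?B \<union> ?R Y0)"
      unfolding num_below_def using assms(1) by (simp add: card_mono)
    also have "\<dots> \<le> card ?B + card (?R Y0)"
      by (rule card_Un_le)
    also have "\<dots> \<le> card J + card (?R v)"
      using H card_mono[OF _ R_below] assms(1) by simp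
    also have "\<dots> = card (J \<union> ?R v)"
      using assms(1,2) finite_subset by (subst card_Un_disjoint) auto
    also have "\<dots> \<le> num_below v A j"
      unfolding num_below_def using J_below assms(1) by (intro card_mono) auto
    finally show ?thesis .
  qed
qed

lemma tRS_imputed_le:
  fixes Y1 Y0 :: "nat \<Rightarrow> real" and v :: "nat \<Rightarrow> ereal"
  assumes "finite S" "A \<subseteq> S" "mono phi" "J \<subseteq> A"
    and "\<And>r q. r \<in> A - J \<Longrightarrow> q \<in> J \<Longrightarrow> precedes Y1 r q"
    and "card {i\<in>A. c < Y1 i - Y0 i} \<le> card J"
    and v: "\<And>i. i \<in> S \<Longrightarrow> v i = (if i \<in> J then -\<infinity> else ereal (if i \<in> A then Y1 i - c else Y0 i))"
  shows "tRS b phi S A v \<le> tRS b phi S A Y0"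
proof (rule tRS_mono[OF assms(1-3)])
  fix j assume j: "j \<in> S - A"
  have finA: "finite A"
    using assms(1,2) finite_subset by blast
  have vJ: "v i = -\<infinity>" if "i \<in> J" for i
    using that v[of i] assms(2,4) by auto
  have vA: "v i = ereal (Y1 i - c)" if "i \<in> A - J" for i
    using that v[of i] assms(2) by auto
  have vj: "v j = ereal (Y0 j)"
    using j v[of j] assms(4) by auto
  from j show "num_below Y0 A j \<le> num_below v A j"
    by (intro num_below_imputed_ge[OF finA assms(4) _ assms(5,6) vJ vA vj]) simp
qed

section \<open>Randomization p-values under complete randomization\<close>

definition subsets_of_size :: "'a set \<Rightarrow> nat \<Rightarrow> 'a set set" where
  "subsets_of_size S m = {A. A \<subseteq> S \<and> card A = m}"

lemma finite_subsets_of_size: "finite S \<Longrightarrow> finite (subsets_of_size S m)"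
  unfolding subsets_of_size_def by (rule finite_subset[of _ "Pow S"]) auto

lemma subsets_of_size_eq_empty_iff:
  assumes "finite S"
  shows "subsets_of_size S m = {} \<longleftrightarrow> card S < m"
proof
  assume empty: "subsets_of_size S m = {}"
  show "card S < m"
  proof (rule ccontr)
    assume "\<not> card S < m"
    then obtain A where "A \<subseteq> S" "card A = m"
      by (meson not_less obtain_subset_with_card_n)
    with empty show False
      unfolding subsets_of_size_def by blast
  qed
next
  assume "card S < m"
  then show "subsets_of_size S m = {}"
    unfolding subsets_of_size_def by (auto dest!: card_mono[OF assms])
qed

lemma assignments_eq_subsets_of_size: "assignments n n1 = subsets_of_size {..<n} n1"
  unfolding assignments_def subsets_of_size_def ..

lemma card_subsets_tRS_canonical:
  assumes "finite S"
  shows "card {A\<in>subsets_of_size S m. c \<le> tRS b phi S A y}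
       = card {B\<in>subsets_of_size {..<card S} m. c \<le> tRS b phi {..<card S} B id}"
proof -
  let ?h = "num_below y S"
  have bij: "bij_betw ?h S {..<card S}"
    by (rule bij_betw_num_below[OF assms])
  have iso: "precedes y i j \<longleftrightarrow> precedes id (?h i) (?h j)" if "i \<in> S" "j \<in> S" for i j
  proof (cases "i = j")
    case False
    then show ?thesis
      using num_below_less_iff[OF assms that(1) False, where y = y] by (simp add: precedes_id)
  qed (simp add: precedes_irrefl)
  have "bij_betw (image ?h) (subsets_of_size S m) (subsets_of_size {..<card S} m)"
  proof -
    have "card (?h ` A) = card A" if "A \<in> Pow S" for A
      using bij that by (meson PowD bij_betw_imp_inj_on card_image inj_on_subset)
    then have "bij_betw (image ?h) {A\<in>Pow S. card A = m} {B\<in>Pow {..<card S}. card B = m}"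
      by (intro bij_betw_Collect[OF bij_betw_Pow[OF bij]]) simp
    then show ?thesis
      unfolding subsets_of_size_def by (simp add: Pow_def)
  qed
  then have "bij_betw (image ?h) {A\<in>subsets_of_size S m. c \<le> tRS b phi S A y}
      {B\<in>subsets_of_size {..<card S} m. c \<le> tRS b phi {..<card S} B id}"
    by (rule bij_betw_Collect)
      (simp add: tRS_order_iso[OF assms bij _ iso, symmetric] subsets_of_size_def)
  then show ?thesis
    by (rule bij_betw_same_card)
qed

lemma GRS_eq_card:
  assumes "finite S" "m \<le> card S"
  shows "GRS b phi S m y0 c =
    card {A\<in>subsets_of_size S m. c \<le> tRS b phi S A y} / card (subsets_of_size S m)"
proof -
  have "subsets_of_size S m \<noteq> {}"
    using subsets_of_size_eq_empty_iff[OF assms(1)] assms(2) by simp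
  then have "GRS b phi S m y0 c =
      card (subsets_of_size S m \<inter> {A. c \<le> tRS b phi S A y0}) / card (subsets_of_size S m)"
    unfolding GRS_def subsets_of_size_def[symmetric]
    by (rule measure_pmf_of_set[OF _ finite_subsets_of_size[OF assms(1)]])
  also have "subsets_of_size S m \<inter> {A. c \<le> tRS b phi S A y0} = {A\<in>subsets_of_size S m. c \<le> tRS b phi S A y0}"
    by blast
  finally show ?thesis
    unfolding card_subsets_tRS_canonical[OF assms(1)] .
qed

lemma GRS_antimono: "c \<le> c' \<Longrightarrow> GRS b phi S m y0 c' \<le> GRS b phi S m y0 c"
  unfolding GRS_def by (intro measure_pmf.finite_measure_mono) auto

lemma card_pvalue_le:
  fixes t :: "'a \<Rightarrow> real" and \<alpha> :: real
  assumes "finite X" "0 \<le> \<alpha>" and G: "\<And>c. G c = card {x\<in>X. c \<le> t x} / card X"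
  shows "card {x\<in>X. G (t x) \<le> \<alpha>} \<le> \<alpha> * card X"
proof (cases "{x\<in>X. G (t x) \<le> \<alpha>} = {}")
  case True
  show ?thesis
    unfolding True using assms(2) by simp
next
  case False
  let ?W = "{x\<in>X. G (t x) \<le> \<alpha>}"
  define x0 where "x0 = arg_min_on t ?W"
  have finW: "finite ?W"
    using assms(1) by simp
  have x0: "x0 \<in> ?W"
    unfolding x0_def using arg_min_if_finite(1)[OF finW False] .
  have "?W \<subseteq> {x\<in>X. t x0 \<le> t x}"
    unfolding x0_def using arg_min_least[OF finW False] by blast
  then have "card ?W \<le> card {x\<in>X. t x0 \<le> t x}"
    using assms(1) by (intro card_mono) auto
  also have "real (card {x\<in>X. t x0 \<le> t x}) = G (t x0) * card X"
    using G[of "t x0"] x0 assms(1) by (auto simp: card_gt_0_iff)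
  also have "\<dots> \<le> \<alpha> * card X"
    using x0 by (intro mult_right_mono) auto
  finally show ?thesis
    by simp
qed

lemma card_subsets_GRS_le:
  fixes \<alpha> :: real
  assumes "finite S" "0 \<le> \<alpha>"
  shows "card {A\<in>subsets_of_size S m. GRS b phi S m y0 (tRS b phi S A u) \<le> \<alpha>}
    \<le> \<alpha> * card (subsets_of_size S m)"
proof (cases "m \<le> card S")
  case True
  show ?thesis
    by (rule card_pvalue_le[OF finite_subsets_of_size[OF assms(1)] assms(2)])
      (rule GRS_eq_card[OF assms(1) True])
next
  case False
  then show ?thesis
    using subsets_of_size_eq_empty_iff[OF assms(1), of m] by simp
qed

lemma bij_betw_split_subsets_of_size:
  assumes "finite U" "S \<subseteq> U" "m \<le> n1"
  shows "bij_betw (\<lambda>T. (S \<inter> T, T - S)) {T\<in>subsets_of_size U n1. card (S \<inter> T) = m}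
    (subsets_of_size S m \<times> subsets_of_size (U - S) (n1 - m))"
proof (rule bij_betw_byWitness[where f' = "\<lambda>(A, R). A \<union> R"])
  have card_split: "card T = card (S \<inter> T) + card (T - S)" if "T \<subseteq> U" for T
    using card_Int_Diff[OF finite_subset[OF that assms(1)], of S] by (simp add: Int_commute)
  show "\<forall>T\<in>{T\<in>subsets_of_size U n1. card (S \<inter> T) = m}. (\<lambda>(A, R). A \<union> R) (S \<inter> T, T - S) = T"
    by auto
  show "\<forall>AR\<in>subsets_of_size S m \<times> subsets_of_size (U - S) (n1 - m).
      (\<lambda>T. (S \<inter> T, T - S)) ((\<lambda>(A, R). A \<union> R) AR) = AR"
    by (auto simp: subsets_of_size_def)
  have "(S \<inter> T, T - S) \<in> subsets_of_size S m \<times> subsets_of_size (U - S) (n1 - m)"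
    if "T \<in> {T\<in>subsets_of_size U n1. card (S \<inter> T) = m}" for T
    using that card_split[of T] by (auto simp: subsets_of_size_def)
  then show "(\<lambda>T. (S \<inter> T, T - S)) ` {T\<in>subsets_of_size U n1. card (S \<inter> T) = m}
      \<subseteq> subsets_of_size S m \<times> subsets_of_size (U - S) (n1 - m)"
    by blast
  have "A \<union> R \<in> {T\<in>subsets_of_size U n1. card (S \<inter> T) = m}"
    if A: "A \<in> subsets_of_size S m" and R: "R \<in> subsets_of_size (U - S) (n1 - m)" for A R
  proof -
    have "S \<inter> (A \<union> R) = A" "A \<union> R - S = R" "A \<union> R \<subseteq> U"
      using A R assms(2) by (auto simp: subsets_of_size_def)
    then show ?thesis
      using card_split[of "A \<union> R"] A R assms(3) by (simp add: subsets_of_size_def)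
  qed
  then show "(\<lambda>(A, R). A \<union> R) ` (subsets_of_size S m \<times> subsets_of_size (U - S) (n1 - m))
      \<subseteq> {T\<in>subsets_of_size U n1. card (S \<inter> T) = m}"
    by auto
qed

lemma card_subsets_of_size_by_trace:
  assumes "finite U" "S \<subseteq> U"
  shows "card {T\<in>subsets_of_size U n1. P (S \<inter> T)} =
    (\<Sum>m\<le>n1. card {A\<in>subsets_of_size S m. P A} * card (subsets_of_size (U - S) (n1 - m)))"
proof -
  let ?F = "\<lambda>m. {T\<in>subsets_of_size U n1. card (S \<inter> T) = m \<and> P (S \<inter> T)}"
  have "card (S \<inter> T) \<le> n1" if "T \<in> subsets_of_size U n1" for T
  proof -
    have "T \<subseteq> U" "card T = n1"
      using that by (auto simp: subsets_of_size_def)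
    then show ?thesis
      using card_mono[OF finite_subset[OF \<open>T \<subseteq> U\<close> assms(1)], of "S \<inter> T"] by simp
  qed
  then have "{T\<in>subsets_of_size U n1. P (S \<inter> T)} = (\<Union>m\<le>n1. ?F m)"
    by auto
  moreover have "card (\<Union>m\<le>n1. ?F m) = (\<Sum>m\<le>n1. card (?F m))"
    by (rule card_UN_disjoint) (use finite_subsets_of_size[OF assms(1)] in auto)
  ultimately have "card {T\<in>subsets_of_size U n1. P (S \<inter> T)} = (\<Sum>m\<le>n1. card (?F m))"
    by simp
  also have "\<dots> = (\<Sum>m\<le>n1. card {A\<in>subsets_of_size S m. P A} * card (subsets_of_size (U - S) (n1 - m)))"
  proof (rule sum.cong[OF refl])
    fix m assume "m \<in> {..n1}"
    then have "bij_betw (\<lambda>T. (S \<inter> T, T - S))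
        {T\<in>{T\<in>subsets_of_size U n1. card (S \<inter> T) = m}. P (S \<inter> T)}
        {AR\<in>subsets_of_size S m \<times> subsets_of_size (U - S) (n1 - m). P (fst AR)}"
      by (intro bij_betw_Collect[OF bij_betw_split_subsets_of_size[OF assms]]) auto
    moreover have "{T\<in>{T\<in>subsets_of_size U n1. card (S \<inter> T) = m}. P (S \<inter> T)} = ?F m"
      by auto
    moreover have "{AR\<in>subsets_of_size S m \<times> subsets_of_size (U - S) (n1 - m). P (fst AR)}
        = {A\<in>subsets_of_size S m. P A} \<times> subsets_of_size (U - S) (n1 - m)"
      by auto
    ultimately have "card (?F m) = card ({A\<in>subsets_of_size S m. P A} \<times> subsets_of_size (U - S) (n1 - m))"
      using bij_betw_same_card by fastforce
    then show "card (?F m) = card {A\<in>subsets_of_size S m. P A} * card (subsets_of_size (U - S) (n1 - m))"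
      by (simp only: card_cartesian_product)
  qed
  finally show ?thesis .
qed

lemma card_subsets_of_size_pvalue_le:
  fixes \<alpha> :: real
  assumes "finite U" "S \<subseteq> U" "0 \<le> \<alpha>"
  shows "card {T\<in>subsets_of_size U n1. GRS b phi S (card (S \<inter> T)) y0 (tRS b phi S T u) \<le> \<alpha>}
    \<le> \<alpha> * card (subsets_of_size U n1)"
proof -
  let ?K = "\<lambda>m. real (card (subsets_of_size (U - S) (n1 - m)))"
  let ?Q = "\<lambda>m. {A\<in>subsets_of_size S m. GRS b phi S m y0 (tRS b phi S A u) \<le> \<alpha>}"
  have finS: "finite S"
    using assms(1,2) finite_subset by blast
  have "{A\<in>subsets_of_size S m. GRS b phi S (card A) y0 (tRS b phi S A u) \<le> \<alpha>} = ?Q m" for m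
    by (auto simp: subsets_of_size_def)
  then have "real (card {T\<in>subsets_of_size U n1. GRS b phi S (card (S \<inter> T)) y0 (tRS b phi S T u) \<le> \<alpha>})
      = (\<Sum>m\<le>n1. card (?Q m) * ?K m)"
    using card_subsets_of_size_by_trace[OF assms(1,2), of n1
        "\<lambda>A. GRS b phi S (card A) y0 (tRS b phi S A u) \<le> \<alpha>"]
    by (simp add: tRS_Int)
  also have "\<dots> \<le> (\<Sum>m\<le>n1. \<alpha> * card (subsets_of_size S m) * ?K m)"
    by (intro sum_mono mult_right_mono card_subsets_GRS_le[OF finS assms(3)]) simp
  also have "\<dots> = \<alpha> * (\<Sum>m\<le>n1. card (subsets_of_size S m) * ?K m)"
    by (simp add: sum_distrib_left mult.assoc)
  also have "\<dots> = \<alpha> * card (subsets_of_size U n1)"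
    using card_subsets_of_size_by_trace[OF assms(1,2), of n1 "\<lambda>_. True"] by simp
  finally show ?thesis .
qed

(* Needs Y(0) also on the treated units, so it is not a statistic of the observed data. *)
definition oracle_pval :: "bool \<Rightarrow> (nat \<Rightarrow> real) \<Rightarrow> nat set \<Rightarrow> (nat \<Rightarrow> real)
                            \<Rightarrow> (nat \<Rightarrow> 'a::linorder) \<Rightarrow> nat set \<Rightarrow> real" where
  "oracle_pval b phi S y0 u T = GRS b phi S (card (S \<inter> T)) y0 (tRS b phi S T u)"

lemma prob_oracle_pval_le:
  fixes \<alpha> :: real
  assumes "S \<subseteq> {..<n}" "n1 \<le> n" "0 \<le> \<alpha>"
  shows "measure_pmf.prob (pmf_of_set (assignments n n1)) {T. oracle_pval b phi S y0 u T \<le> \<alpha>} \<le> \<alpha>"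
proof -
  let ?asg = "subsets_of_size {..<n} n1"
  have "?asg \<noteq> {}" "finite ?asg"
    using subsets_of_size_eq_empty_iff[of "{..<n}" n1] assms(2) finite_subsets_of_size by auto
  then have "measure_pmf.prob (pmf_of_set ?asg) {T. oracle_pval b phi S y0 u T \<le> \<alpha>}
      = card {T\<in>?asg. oracle_pval b phi S y0 u T \<le> \<alpha>} / card ?asg"
    by (simp add: measure_pmf_of_set Int_def conj_commute)
  also have "\<dots> \<le> \<alpha>"
    using card_subsets_of_size_pvalue_le[OF _ assms(1,3), of n1] \<open>?asg \<noteq> {}\<close> \<open>finite ?asg\<close>
    by (simp add: oracle_pval_def divide_le_eq card_gt_0_iff)
  finally show ?thesis
    unfolding assignments_eq_subsets_of_size .
qed

section \<open>Prediction intervals for the treated effects\<close>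

lemma Sobs_sharp: "\<forall>i<n. M1 i = M0 i \<Longrightarrow> Sobs n M1 M0 T = {i. i < n \<and> M1 i}"
  unfolding Sobs_def Mobs_def by auto

lemma finite_Sobs: "finite (Sobs n M1 M0 T)"
  unfolding Sobs_def by simp

lemma Jtop_eq_top_set: "Jtop n M1 M0 Y1 Y0 T L = top_set Y1 (Sobs n M1 M0 T \<inter> T) L"
proof -
  let ?A = "Sobs n M1 M0 T \<inter> T"
  have "{j\<in>?A. j \<noteq> i \<and> psi j i (Yobs Y1 Y0 T j) (Yobs Y1 Y0 T i) = 1} = {j\<in>?A. precedes Y1 i j}"
    if "i \<in> ?A" for i
    using that unfolding psi_def precedes_def Yobs_def by auto
  then show ?thesis
    unfolding Jtop_def top_set_def Let_def by auto
qed

lemma vvec_Sobs: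
  "i \<in> Sobs n M1 M0 T \<Longrightarrow> vvec n M1 M0 Y1 Y0 T k c i =
    (if i \<in> Jtop n M1 M0 Y1 Y0 T (nS1 n M1 M0 T - k) then -\<infinity>
     else ereal (if i \<in> Sobs n M1 M0 T \<inter> T then Y1 i - c else Y0 i))"
  unfolding vvec_def Yobs_def by auto

lemma oracle_pval_le_pval:
  assumes "mono phi" "k \<le> nS1 n M1 M0 T" "Hto n M1 M0 Y1 Y0 T k c"
  shows "oracle_pval b phi (Sobs n M1 M0 T) y0 Y0 T \<le> pval n M1 M0 Y1 Y0 b phi y0 T k c"
proof -
  define S where "S = Sobs n M1 M0 T"
  define A where "A = S \<inter> T"
  define J where "J = Jtop n M1 M0 Y1 Y0 T (card A - k)"
  let ?v = "vvec n M1 M0 Y1 Y0 T k c"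
  have finS: "finite S"
    unfolding S_def by (rule finite_Sobs)
  then have finA: "finite A"
    unfolding A_def by simp
  have nS1: "nS1 n M1 M0 T = card A"
    unfolding nS1_def A_def S_def ..
  have J_top: "J = top_set Y1 A (card A - k)"
    unfolding J_def A_def S_def by (rule Jtop_eq_top_set)
  have "tRS b phi S A ?v \<le> tRS b phi S A Y0"
  proof (rule tRS_imputed_le[OF finS _ assms(1), where J = J])
    show "A \<subseteq> S" "J \<subseteq> A"
      unfolding A_def J_top top_set_def by auto
    show "precedes Y1 r q" if "r \<in> A - J" "q \<in> J" for r q
      using precedes_top_set[OF finA] that unfolding J_top by blast
    show "card {i\<in>A. c < Y1 i - Y0 i} \<le> card J"
      using assms(3) card_top_set[OF finA, of "card A - k" Y1]
      unfolding Hto_def J_top nS1 by (simp add: A_def S_def)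
    show "?v i = (if i \<in> J then -\<infinity> else ereal (if i \<in> A then Y1 i - c else Y0 i))" if "i \<in> S" for i
      using vvec_Sobs[of i n M1 M0 T] that unfolding J_def nS1 A_def S_def by simp
  qed
  then have "GRS b phi S (card A) y0 (tRS b phi S T Y0) \<le> GRS b phi S (card A) y0 (tRS b phi S T ?v)"
    unfolding A_def tRS_Int by (rule GRS_antimono)
  then show ?thesis
    unfolding oracle_pval_def pval_def Let_def nS1 by (simp add: A_def S_def)
qed

lemma mono_pval:
  assumes "mono phi"
  shows "mono (pval n M1 M0 Y1 Y0 b phi y0 T k)"
proof (rule monoI)
  fix c c' :: real
  assume "c \<le> c'"
  define S where "S = Sobs n M1 M0 T"
  have "tRS b phi S (S \<inter> T) (vvec n M1 M0 Y1 Y0 T k c') \<le> tRS b phi S (S \<inter> T) (vvec n M1 M0 Y1 Y0 T k c)"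
    by (rule tRS_mono_treated[OF _ _ assms]) (use \<open>c \<le> c'\<close> in \<open>auto simp: S_def finite_Sobs vvec_Sobs\<close>)
  then show "pval n M1 M0 Y1 Y0 b phi y0 T k c \<le> pval n M1 M0 Y1 Y0 b phi y0 T k c'"
    unfolding pval_def Let_def S_def[symmetric] tRS_Int by (rule GRS_antimono)
qed

lemma card_greater_kth_smallest_le:
  fixes xs :: "'a list" and \<tau> :: "'a \<Rightarrow> 'b::linorder"
  assumes "distinct xs" "1 \<le> k" "k \<le> length xs"
  shows "card {i\<in>set xs. sort (map \<tau> xs) ! (k - 1) < \<tau> i} \<le> length xs - k"
proof -
  let ?ys = "sort (map \<tau> xs)"
  let ?P = "\<lambda>y. ?ys ! (k - 1) < y"
  have "\<not> ?P y" if "y \<in> set (take k ?ys)" for y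
  proof -
    obtain i where "i < k" "i < length ?ys" "y = ?ys ! i"
      using \<open>y \<in> set (take k ?ys)\<close> by (auto simp: in_set_conv_nth)
    moreover have "?ys ! i \<le> ?ys ! (k - 1)"
      using \<open>i < k\<close> assms(3) by (intro sorted_nth_mono) auto
    ultimately show ?thesis
      by simp
  qed
  then have "filter ?P (take k ?ys) = []"
    by (simp add: filter_empty_conv)
  have "card {i\<in>set xs. ?P (\<tau> i)} = length (filter ?P (map \<tau> xs))"
    using distinct_length_filter[OF assms(1)] by (simp add: filter_map comp_def Int_def conj_commute)
  also have "\<dots> = length (filter ?P ?ys)"
    by (metis mset_filter mset_sort size_mset)
  also have "\<dots> = length (filter ?P (drop k ?ys))"
    using \<open>filter ?P (take k ?ys) = []\<close> by (metis append_take_drop_id filter_append self_append_conv2)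
  also have "\<dots> \<le> length xs - k"
    using length_filter_le[of ?P "drop k ?ys"] by simp
  finally show ?thesis .
qed

lemma Hto_tau_to:
  assumes "1 \<le> k" "k \<le> nS1 n M1 M0 T"
  shows "Hto n M1 M0 Y1 Y0 T k (tau_to n M1 M0 Y1 Y0 T k)"
proof -
  let ?xs = "sorted_list_of_set (Sobs n M1 M0 T \<inter> T)"
  have "finite (Sobs n M1 M0 T \<inter> T)"
    using finite_Sobs by blast
  then have "distinct ?xs" "set ?xs = Sobs n M1 M0 T \<inter> T" "length ?xs = nS1 n M1 M0 T"
    by (simp_all add: nS1_def)
  then show ?thesis
    using card_greater_kth_smallest_le[of ?xs k "\<lambda>i. Y1 i - Y0 i"] assms
    unfolding Hto_def tau_to_def by simp
qed

lemma up_closed_real_set_cases: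
  fixes I :: "real set"
  assumes up: "\<And>c c'. c \<in> I \<Longrightarrow> c \<le> c' \<Longrightarrow> c' \<in> I"
  shows "I = {c. Inf (ereal ` I) \<le> ereal c} \<or> I = {c. Inf (ereal ` I) < ereal c}"
proof -
  let ?h = "Inf (ereal ` I)"
  have lower: "I \<subseteq> {c. ?h \<le> ereal c}"
    by (auto intro: Inf_lower)
  have upper: "{c. ?h < ereal c} \<subseteq> I"
  proof
    fix c assume "c \<in> {c. ?h < ereal c}"
    then obtain x where "x \<in> I" "ereal x < ereal c"
      by (auto simp: Inf_less_iff)
    then show "c \<in> I"
      using up by auto
  qed
  show ?thesis
  proof (cases "?h \<in> ereal ` I")
    case True
    then have "{c. ?h \<le> ereal c} \<subseteq> I"
      using up by auto
    then show ?thesis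
      using lower by blast
  next
    case False
    then have "I \<subseteq> {c. ?h < ereal c}"
      using lower by (auto simp: order.order_iff_strict)
    then show ?thesis
      using upper by blast
  qed
qed

lemma Ito_half_line:
  assumes "mono phi"
  shows "let I = Ito n M1 M0 Y1 Y0 b phi y0 \<alpha> T k; h = Inf (ereal ` I) in
    I = {c. h \<le> ereal c} \<or> I = {c. h < ereal c}"
proof -
  have "mono (pval n M1 M0 Y1 Y0 b phi y0 T k)"
    by (rule mono_pval[OF assms])
  then have "c' \<in> Ito n M1 M0 Y1 Y0 b phi y0 \<alpha> T k"
    if "c \<in> Ito n M1 M0 Y1 Y0 b phi y0 \<alpha> T k" "c \<le> c'" for c c'
    using that monoD[of _ c c'] unfolding Ito_def by fastforce
  then show ?thesis
    unfolding Let_def by (rule up_closed_real_set_cases)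
qed

theorem theorem9:
  fixes n n1 :: nat and Y1 Y0 :: "nat \<Rightarrow> real" and M1 M0 :: "nat \<Rightarrow> bool"
    and b :: bool and phi :: "nat \<Rightarrow> real" and y0 :: "nat \<Rightarrow> real" and \<alpha> :: real
  assumes n1_pos: "1 \<le> n1" and n0_pos: "n1 < n"
    and phi_mono: "mono phi"
    and sharp: "\<forall>i<n. M1 i = M0 i"
    and alpha: "0 < \<alpha>" "\<alpha> < 1"
  shows
    "(\<forall>k c. 1 \<le> k \<longrightarrow>
        measure_pmf.prob (pmf_of_set (assignments n n1))
          {T. k \<le> nS1 n M1 M0 T \<and> Hto n M1 M0 Y1 Y0 T k c
              \<and> pval n M1 M0 Y1 Y0 b phi y0 T k c \<le> \<alpha>} \<le> \<alpha>)
   \<and> (\<forall>k. 1 \<le> k \<longrightarrow>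
        measure_pmf.prob (pmf_of_set (assignments n n1))
          {T. k \<le> nS1 n M1 M0 T \<longrightarrow>
              tau_to n M1 M0 Y1 Y0 T k \<in> Ito n M1 M0 Y1 Y0 b phi y0 \<alpha> T k} \<ge> 1 - \<alpha>)
   \<and> (\<forall>k T. T \<in> assignments n n1 \<and> 1 \<le> k \<and> k \<le> nS1 n M1 M0 T \<longrightarrow>
        (let I = Ito n M1 M0 Y1 Y0 b phi y0 \<alpha> T k; h = Inf (ereal ` I) in
           I = {c. h \<le> ereal c} \<or> I = {c. h < ereal c}))
   \<and> measure_pmf.prob (pmf_of_set (assignments n n1))
        {T. \<forall>k. 1 \<le> k \<and> k \<le> nS1 n M1 M0 T \<longrightarrow>
              tau_to n M1 M0 Y1 Y0 T k \<in> Ito n M1 M0 Y1 Y0 b phi y0 \<alpha> T k} \<ge> 1 - \<alpha>"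
proof -
  define S where "S = {i. i < n \<and> M1 i}"
  define W where "W = {T. oracle_pval b phi S y0 Y0 T \<le> \<alpha>}"
  define Good where "Good = {T. \<forall>k. 1 \<le> k \<and> k \<le> nS1 n M1 M0 T \<longrightarrow>
    tau_to n M1 M0 Y1 Y0 T k \<in> Ito n M1 M0 Y1 Y0 b phi y0 \<alpha> T k}"
  let ?P = "measure_pmf.prob (pmf_of_set (assignments n n1))"
  have Sobs: "Sobs n M1 M0 T = S" for T
    unfolding S_def by (rule Sobs_sharp[OF sharp])
  have W: "?P W \<le> \<alpha>"
    unfolding W_def by (rule prob_oracle_pval_le) (use n0_pos alpha in \<open>auto simp: S_def\<close>)
  have in_W: "T \<in> W" if "k \<le> nS1 n M1 M0 T" "Hto n M1 M0 Y1 Y0 T k c"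
    "pval n M1 M0 Y1 Y0 b phi y0 T k c \<le> \<alpha>" for T k c
    using oracle_pval_le_pval[OF phi_mono that(1,2), of b y0] that(3) unfolding W_def Sobs by simp
  have "1 - \<alpha> \<le> 1 - ?P W"
    using W by simp
  also have "\<dots> = ?P (- W)"
    using measure_pmf.prob_compl[of W] by (simp add: Compl_eq_Diff_UNIV)
  also have "\<dots> \<le> ?P Good"
    using in_W Hto_tau_to unfolding Good_def Ito_def
    by (intro measure_pmf.finite_measure_mono) fastforce+
  finally have cover: "1 - \<alpha> \<le> ?P Good" .
  show ?thesis (is "?valid \<and> ?covers \<and> ?half_line \<and> ?simultaneous")
  proof (intro conjI)
    show ?valid
      using in_W by (intro allI impI order_trans[OF _ W] measure_pmf.finite_measure_mono) auto
    show ?covers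
      by (intro allI impI order_trans[OF cover] measure_pmf.finite_measure_mono) (auto simp: Good_def)
    show ?half_line
      using Ito_half_line[OF phi_mono] by blast
    show ?simultaneous
      using cover unfolding Good_def .
  qed
qed

end
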